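(* Let $p$ be a prime with $p\equiv 1\pmod 8$, let $n$ be the least integer with $2^n>p$, let $N=2^n$, and let $\theta=\arccos\!\left(1-\frac{N}{p-1}\right)$. For $x\in\{0,1,\ldots,N-1\}$ let $x_0$ be the least significant bit of $x$ and let $f(x)=1$ if $0\le x<p$ and $\left(\frac{x}{p}\right)=-1$, and $f(x)=0$ otherwise. Define amplitudes $\alpha_x=\frac{1}{\sqrt N}e^{i\theta f(x)(1-2x_0)}$ for $0\le x<N$, let $\bar\alpha=\frac{1}{N}\sum_{x=0}^{N-1}\alpha_x$, and let $\beta_x=2\bar\alpha-\alpha_x$ (the result of inversion about the mean, as implemented by a Grover diffusion step). Then $\bar\alpha=\frac{1}{2\sqrt N}$, $\beta_x=\frac{1}{\sqrt N}\bigl(1-e^{i\theta f(x)(1-2x_0)}\bigr)$, $\beta_x=0$ whenever $f(x)=0$, and $|\beta_x|^2=\frac{2}{p-1}$ whenever $f(x)=1$. Consequently, measuring the state $\sum_x\beta_x|x\rangle$ in the computational basis yields a quadratic nonresidue modulo $p$ with probability $1$, uniformly distributed over the $\frac{p-1}{2}$ quadratic nonresidues in $\{1,\ldots,p-1\}$.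
   Context: $\left(\frac{x}{p}\right)$ denotes the Legendre (Jacobi) symbol modulo the odd prime $p$: $1$ for quadratic residues, $-1$ for quadratic nonresidues, $0$ for $x\equiv 0\pmod p$. A quadratic nonresidue modulo $p$ is an integer $a$ coprime to $p$ such that $x^2\equiv a\pmod p$ has no solution. *)

theory Defs
  imports "HOL-Analysis.Analysis" "HOL-Number_Theory.Number_Theory"
begin

definition nbits :: "nat \<Rightarrow> nat" where
  "nbits p = (LEAST n::nat. 2^n > p)"

definition NN :: "nat \<Rightarrow> nat" where
  "NN p = 2 ^ nbits p"

definition theta :: "nat \<Rightarrow> real" where
  "theta p = arccos (1 - real (NN p) / (real p - 1))"

definition fq :: "nat \<Rightarrow> nat \<Rightarrow> nat" where
  "fq p x = (if x < p \<and> Legendre (int x) (int p) = -1 then 1 else 0)"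

definition lsb :: "nat \<Rightarrow> nat" where
  "lsb x = x mod 2"

definition alpha :: "nat \<Rightarrow> nat \<Rightarrow> complex" where
  "alpha p x = complex_of_real (1 / sqrt (real (NN p))) *
     exp (\<i> * complex_of_real (theta p * real (fq p x) * (1 - 2 * real (lsb x))))"

definition alphabar :: "nat \<Rightarrow> complex" where
  "alphabar p = (\<Sum>x<NN p. alpha p x) / of_nat (NN p)"

definition beta :: "nat \<Rightarrow> nat \<Rightarrow> complex" where
  "beta p x = 2 * alphabar p - alpha p x"

end

theory Submission
  imports Defs
begin

(* Since p = 1 (mod 4), -1 is a square mod p, so x \<mapsto> p - x permutes the nonresidues in
   {1..p-1}; as p is odd it also flips the least significant bit. The phases e^(i\<theta>) and
   e^(-i\<theta>) of the marked states therefore pair up, and the mean amplitude is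
   ((p-1)/2 * cos \<theta> + N - (p-1)/2) / (N sqrt N). The choice cos \<theta> = 1 - N/(p-1) makes this
   1/(2 sqrt N), so inversion about the mean cancels every unmarked amplitude and leaves
   each of the (p-1)/2 nonresidues (squaring is two-to-one on the units) with probability
   |1 - e^(\<plusminus>i\<theta>)|^2 / N = (2 - 2 cos \<theta>)/N = 2/(p-1). *)

definition nonresidues :: "nat \<Rightarrow> nat set" where
  "nonresidues p = {x \<in> {1..p-1}. \<not> QuadRes (int p) (int x)}"

lemma QuadRes_mult: "QuadRes m a \<Longrightarrow> QuadRes m b \<Longrightarrow> QuadRes m (a * b)"
  unfolding QuadRes_def by (metis cong_mult power_mult_distrib)

lemma QuadRes_minus_one:
  assumes p: "prime p" and "p mod 4 = 1"
  shows "QuadRes (int p) (-1)"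
proof (rule ccontr)
  assume "\<not> QuadRes (int p) (-1)"
  moreover have "\<not> [-1 = 0] (mod int p)"
    using prime_gt_1_nat[OF p] by (simp add: cong_0_iff)
  ultimately have "Legendre (-1) (int p) = -1"
    unfolding Legendre_def by simp
  moreover have "2 < p" "even ((p - 1) div 2)"
    using prime_ge_2_nat[OF p] \<open>p mod 4 = 1\<close> by presburger+
  ultimately have "[-1 = 1] (mod int p)"
    using euler_criterion[OF p, of "-1"] by simp
  then have "int p dvd 2"
    by (simp add: cong_iff_dvd_diff)
  with \<open>2 < p\<close> show False
    by (auto dest: zdvd_imp_le)
qed

lemma nonresidue_reflect:
  assumes "prime p" "p mod 4 = 1" "x \<in> nonresidues p"
  shows "p - x \<in> nonresidues p"
proof -
  have x: "1 \<le> x" "x < p" "\<not> QuadRes (int p) (int x)"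
    using assms(3) prime_gt_1_nat[OF assms(1)] unfolding nonresidues_def by auto
  have "\<not> QuadRes (int p) (int (p - x))"
  proof
    assume "QuadRes (int p) (int (p - x))"
    then have "QuadRes (int p) (-1 * int (p - x))"
      using QuadRes_mult QuadRes_minus_one[OF assms(1,2)] by blast
    moreover have "[-1 * int (p - x) = int x] (mod int p)"
      using x by (simp add: cong_iff_dvd_diff)
    ultimately show False
      using x(3) unfolding QuadRes_def by (meson cong_trans)
  qed
  then show ?thesis
    using x unfolding nonresidues_def by auto
qed

lemma prime_cong_squaresD:
  fixes x y :: int
  assumes "prime p" "[x\<^sup>2 = y\<^sup>2] (mod p)"
  shows "[x = y] (mod p) \<or> [x = - y] (mod p)"
proof -
  have "p dvd (x - y) * (x + y)"
    using assms(2) by (simp add: cong_iff_dvd_diff power2_eq_square algebra_simps)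
  then show ?thesis
    using assms(1) by (auto simp: prime_dvd_mult_iff cong_iff_dvd_diff)
qed

lemma inj_on_square_mod_prime:
  fixes p :: nat
  assumes "prime p"
  shows "inj_on (\<lambda>x. x\<^sup>2 mod p) {1..(p - 1) div 2}"
proof (rule inj_onI)
  fix x y
  assume x: "x \<in> {1..(p - 1) div 2}" and y: "y \<in> {1..(p - 1) div 2}"
    and "x\<^sup>2 mod p = y\<^sup>2 mod p"
  then have "[(int x)\<^sup>2 = (int y)\<^sup>2] (mod int p)"
    by (metis cong_def cong_int_iff of_nat_power)
  then have "[int x = int y] (mod int p) \<or> [int x + int y = 0] (mod int p)"
    using prime_cong_squaresD[of "int p"] assms by (auto simp: cong_iff_dvd_diff)
  moreover have "\<not> [int x + int y = 0] (mod int p)"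
    using x y by (auto simp: cong_0_iff dest: zdvd_imp_le)
  ultimately have "[x = y] (mod p)"
    by (simp add: cong_int_iff)
  moreover have "x < p" "y < p"
    using x y prime_gt_0_nat[OF assms] by auto
  ultimately show "x = y"
    by (simp add: cong_less_modulus_unique_nat)
qed

lemma QuadRes_imp_root_in_lower_half:
  fixes p :: nat
  assumes p: "prime p" "2 < p" and x: "x \<in> {1..p-1}" "QuadRes (int p) (int x)"
  shows "\<exists>z \<in> {1..(p - 1) div 2}. z\<^sup>2 mod p = x"
proof -
  obtain y where y: "[y\<^sup>2 = int x] (mod int p)"
    using x(2) unfolding QuadRes_def by blast
  define r where "r = nat (y mod int p)"
  have "int r = y mod int p" "y mod int p < int p"
    using p(2) unfolding r_def by simp_all
  then have r: "r < p" "[(int r)\<^sup>2 = int x] (mod int p)"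
    using y by (auto simp: cong_def power_mod)
  have "[(int (p - r))\<^sup>2 = (int r)\<^sup>2] (mod int p)" if "r \<le> p"
    using that by (simp add: cong_iff_dvd_diff power2_eq_square algebra_simps)
  then have pr: "[(int (p - r))\<^sup>2 = int x] (mod int p)"
    using r by (meson cong_trans less_imp_le)
  have "r \<noteq> 0"
  proof
    assume "r = 0"
    then have "[int x = 0] (mod int p)"
      using r(2) cong_sym by fastforce
    then have "p dvd x"
      by (simp add: cong_0_iff)
    then show False
      using x(1) by (auto dest: dvd_imp_le)
  qed
  moreover have "odd p"
    using p prime_odd_nat by blast
  ultimately obtain z where "z \<in> {1..(p - 1) div 2}" "[(int z)\<^sup>2 = int x] (mod int p)"
  proof (cases "r \<le> (p - 1) div 2")
    case True
    then show ?thesis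
      using that[of r] \<open>r \<noteq> 0\<close> r(2) by auto
  next
    case False
    then have "p - r \<in> {1..(p - 1) div 2}"
      using r(1) \<open>odd p\<close> by (auto elim!: oddE)
    then show ?thesis
      using that pr by blast
  qed
  moreover have "x < p"
    using x(1) p by auto
  ultimately show ?thesis
    by (metis cong_def cong_int_iff mod_less of_nat_power)
qed

lemma image_square_mod_prime:
  assumes "prime p" "2 < p"
  shows "(\<lambda>z. z\<^sup>2 mod p) ` {1..(p - 1) div 2} = {x \<in> {1..p-1}. QuadRes (int p) (int x)}"
proof
  show "{x \<in> {1..p-1}. QuadRes (int p) (int x)} \<subseteq> (\<lambda>z. z\<^sup>2 mod p) ` {1..(p - 1) div 2}"
  proof
    fix x
    assume "x \<in> {x \<in> {1..p-1}. QuadRes (int p) (int x)}"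
    then obtain z where "z \<in> {1..(p - 1) div 2}" "z\<^sup>2 mod p = x"
      using QuadRes_imp_root_in_lower_half[OF assms] by blast
    then show "x \<in> (\<lambda>z. z\<^sup>2 mod p) ` {1..(p - 1) div 2}"
      by blast
  qed
next
  have "z\<^sup>2 mod p \<in> {1..p-1}" if "z \<in> {1..(p - 1) div 2}" for z
  proof -
    have "\<not> p dvd z"
      using that by (auto dest: dvd_imp_le)
    then have "\<not> p dvd z\<^sup>2"
      using assms(1) prime_dvd_power by blast
    then have "z\<^sup>2 mod p \<noteq> 0"
      by (simp add: dvd_eq_mod_eq_0)
    moreover have "z\<^sup>2 mod p < p"
      using assms(2) by simp
    ultimately show ?thesis
      by auto
  qed
  moreover have "QuadRes (int p) (int (z\<^sup>2 mod p))" for z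
    unfolding QuadRes_def by (auto simp: cong_def of_nat_mod intro!: exI[of _ "int z"])
  ultimately show "(\<lambda>z. z\<^sup>2 mod p) ` {1..(p - 1) div 2} \<subseteq> {x \<in> {1..p-1}. QuadRes (int p) (int x)}"
    by auto
qed

lemma card_nonresidues:
  assumes "prime p" "2 < p"
  shows "card (nonresidues p) = (p - 1) div 2"
proof -
  define R where "R = {x \<in> {1..p-1}. QuadRes (int p) (int x)}"
  have "card R = (p - 1) div 2"
    using card_image[OF inj_on_square_mod_prime[OF assms(1)]] image_square_mod_prime[OF assms]
    unfolding R_def by simp
  moreover have "nonresidues p = {1..p-1} - R" "R \<subseteq> {1..p-1}"
    unfolding nonresidues_def R_def by auto
  ultimately have "card (nonresidues p) = (p - 1) - (p - 1) div 2"
    by (simp add: card_Diff_subset finite_subset)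
  moreover have "odd p"
    using assms prime_odd_nat by blast
  ultimately show ?thesis
    by (auto elim!: oddE)
qed

lemma less_two_power_nbits: "p < 2 ^ nbits p"
  unfolding nbits_def by (rule LeastI[of _ p]) simp

lemma two_power_nbits_le: "0 < p \<Longrightarrow> 2 ^ nbits p \<le> 2 * p"
proof (cases "nbits p")
  case (Suc k)
  then have "\<not> p < 2 ^ k"
    using not_less_Least[of k "\<lambda>n. p < 2 ^ n"] unfolding nbits_def by auto
  with Suc show ?thesis
    by simp
qed simp

lemma NN_le:
  assumes "odd p" "1 < p"
  shows "NN p \<le> 2 * p - 2"
proof -
  obtain k where k: "nbits p = Suc k"
    using less_two_power_nbits[of p] assms(2) by (cases "nbits p") auto
  then have "2 ^ k \<noteq> p"
    using assms by (cases k) auto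
  with k have "NN p \<noteq> 2 * p" "even (NN p)"
    unfolding NN_def by auto
  moreover have "NN p \<le> 2 * p"
    using two_power_nbits_le[of p] assms(2) unfolding NN_def by simp
  ultimately show ?thesis
    by (auto elim!: evenE)
qed

lemma cos_theta:
  assumes "odd p" "1 < p"
  shows "cos (theta p) = 1 - real (NN p) / (real p - 1)"
proof -
  have "real (NN p) \<le> real (2 * p - 2)"
    using NN_le[OF assms] by (rule of_nat_mono)
  also have "\<dots> = 2 * (real p - 1)"
    using assms(2) by simp
  finally have "real (NN p) \<le> 2 * (real p - 1)" .
  then have "real (NN p) / (real p - 1) \<le> 2"
    using assms(2) by (simp add: divide_simps)
  moreover have "0 \<le> real (NN p) / (real p - 1)"
    using assms(2) by simp
  ultimately show ?thesis
    unfolding theta_def by (intro cos_arccos) auto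
qed

lemma fq_eq_nonresidues: "prime p \<Longrightarrow> fq p x = of_bool (x \<in> nonresidues p)"
proof -
  assume "prime p"
  have "QuadRes (int p) 0"
    unfolding QuadRes_def by (auto intro: exI[of _ 0])
  moreover have "\<not> [int x = 0] (mod int p)" if "0 < x" "x < p"
    using that by (auto simp: cong_0_iff dest: dvd_imp_le)
  ultimately show ?thesis
    unfolding fq_def nonresidues_def Legendre_def
    by (cases "x = 0") (auto simp: Suc_le_eq less_Suc_eq_le[symmetric])
qed

lemma lsb_diff_odd: "odd p \<Longrightarrow> x < p \<Longrightarrow> lsb (p - x) = 1 - lsb x"
  unfolding lsb_def by (auto elim!: oddE simp: mod2_eq_if)

lemma cos_lsb_phase: "cos (t * (1 - 2 * real (lsb x))) = cos t"
  unfolding lsb_def by (cases "even x") (auto simp: mod2_eq_if)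

lemma norm_one_minus_exp_squared: "(cmod (1 - exp (\<i> * complex_of_real t)))\<^sup>2 = 2 - 2 * cos t"
proof -
  have "(cmod (1 - exp (\<i> * complex_of_real t)))\<^sup>2 = (1 - cos t)\<^sup>2 + (sin t)\<^sup>2"
    by (simp add: cis_conv_exp[symmetric] cmod_power2)
  also have "\<dots> = 2 - 2 * cos t"
    using sin_cos_squared_add[of t] by (simp add: power2_eq_square algebra_simps)
  finally show ?thesis .
qed

lemma sum_exp_antisymmetric_involution:
  assumes "\<And>x. x \<in> A \<Longrightarrow> \<sigma> x \<in> A" "\<And>x. x \<in> A \<Longrightarrow> \<sigma> (\<sigma> x) = x"
    and "\<And>x. x \<in> A \<Longrightarrow> g (\<sigma> x) = - g x"
  shows "(\<Sum>x\<in>A. exp (\<i> * complex_of_real (g x))) = complex_of_real (\<Sum>x\<in>A. cos (g x))"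
proof -
  let ?e = "\<lambda>x. exp (\<i> * complex_of_real (g x))"
  have "(\<Sum>x\<in>A. ?e x) = (\<Sum>x\<in>A. ?e (\<sigma> x))"
    using assms(1,2) by (intro sum.reindex_bij_witness[of _ \<sigma> \<sigma>]) auto
  then have "2 * (\<Sum>x\<in>A. ?e x) = (\<Sum>x\<in>A. ?e x + ?e (\<sigma> x))"
    by (simp add: sum.distrib)
  also have "\<dots> = (\<Sum>x\<in>A. 2 * complex_of_real (cos (g x)))"
    using assms(3) by (intro sum.cong) (simp_all add: cos_exp_eq flip: cos_of_real)
  finally show ?thesis
    by (simp flip: sum_distrib_left)
qed

lemma nonresidues_subset_NN: "nonresidues p \<subseteq> {..<NN p}"
  using less_two_power_nbits[of p] unfolding nonresidues_def NN_def by auto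

lemma alpha_eq:
  "prime p \<Longrightarrow> alpha p x = complex_of_real (1 / sqrt (real (NN p))) *
     (if x \<in> nonresidues p then exp (\<i> * complex_of_real (theta p * (1 - 2 * real (lsb x)))) else 1)"
  unfolding alpha_def by (simp add: fq_eq_nonresidues)

lemma sum_phases_nonresidues:
  assumes "prime p" "p mod 4 = 1"
  shows "(\<Sum>x\<in>nonresidues p. exp (\<i> * complex_of_real (theta p * (1 - 2 * real (lsb x))))) =
    complex_of_real (real (card (nonresidues p)) * cos (theta p))"
proof -
  have "odd p"
    using assms(2) by presburger
  have "p - (p - x) = x" and
    "theta p * (1 - 2 * real (lsb (p - x))) = - (theta p * (1 - 2 * real (lsb x)))"
    if "x \<in> nonresidues p" for x
  proof -
    have "x < p"
      using that unfolding nonresidues_def by auto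
    then show "p - (p - x) = x"
      by simp
    have "lsb x \<le> 1"
      unfolding lsb_def by simp
    with \<open>x < p\<close> show "theta p * (1 - 2 * real (lsb (p - x))) = - (theta p * (1 - 2 * real (lsb x)))"
      using lsb_diff_odd[OF \<open>odd p\<close>] by (simp add: algebra_simps)
  qed
  then have "(\<Sum>x\<in>nonresidues p. exp (\<i> * complex_of_real (theta p * (1 - 2 * real (lsb x))))) =
      complex_of_real (\<Sum>x\<in>nonresidues p. cos (theta p * (1 - 2 * real (lsb x))))"
    using nonresidue_reflect[OF assms]
    by (intro sum_exp_antisymmetric_involution[where \<sigma> = "\<lambda>x. p - x"])
  then show ?thesis
    by (simp add: cos_lsb_phase)
qed

lemma sum_alpha:
  assumes "prime p" "p mod 4 = 1"
  shows "(\<Sum>x<NN p. alpha p x) = complex_of_real (sqrt (real (NN p)) / 2)"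
proof -
  define Q where "Q = nonresidues p"
  define N where "N = NN p"
  define e where "e x = exp (\<i> * complex_of_real (theta p * (1 - 2 * real (lsb x))))" for x
  have "odd p" "1 < p"
    using assms prime_gt_1_nat by presburger+
  have QN: "Q \<subseteq> {..<N}"
    unfolding Q_def N_def by (rule nonresidues_subset_NN)
  then have "card Q \<le> N"
    using card_mono[OF finite_lessThan] by fastforce
  have card_Q: "real (card Q) = (real p - 1) / 2"
    using card_nonresidues[OF assms(1)] \<open>odd p\<close> \<open>1 < p\<close> unfolding Q_def
    by (auto elim!: oddE)
  have "(\<Sum>x<N. alpha p x) = (\<Sum>x<N. complex_of_real (1 / sqrt (real N)) * (if x \<in> Q then e x else 1))"
    unfolding alpha_eq[OF assms(1)] Q_def N_def e_def ..
  also have "\<dots> = complex_of_real (1 / sqrt (real N)) * (\<Sum>x<N. if x \<in> Q then e x else 1)"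
    by (rule sum_distrib_left[symmetric])
  also have "(\<Sum>x<N. if x \<in> Q then e x else 1) = (\<Sum>x\<in>Q. e x) + of_nat (card ({..<N} - Q))"
    using QN by (simp add: sum.If_cases Int_absorb1 Diff_eq)
  also have "complex_of_real (1 / sqrt (real N)) * ((\<Sum>x\<in>Q. e x) + of_nat (card ({..<N} - Q))) =
      complex_of_real (1 / sqrt (real N) * (real (card Q) * cos (theta p) + (real N - real (card Q))))"
    using QN \<open>card Q \<le> N\<close> sum_phases_nonresidues[OF assms, folded Q_def e_def]
    by (simp add: card_Diff_subset finite_subset)
  also have "real (card Q) * cos (theta p) + (real N - real (card Q)) = real N / 2"
    using \<open>1 < p\<close> unfolding card_Q cos_theta[OF \<open>odd p\<close> \<open>1 < p\<close>, folded N_def]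
    by (simp add: field_simps)
  also have "1 / sqrt (real N) * (real N / 2) = sqrt (real N) / 2"
    by (simp add: real_div_sqrt)
  finally show ?thesis
    unfolding N_def .
qed

lemma alphabar_eq:
  assumes "prime p" "p mod 4 = 1"
  shows "alphabar p = complex_of_real (1 / (2 * sqrt (real (NN p))))"
proof -
  have "0 < real (NN p)"
    unfolding NN_def by simp
  have "alphabar p = complex_of_real (sqrt (real (NN p)) / 2 / real (NN p))"
    unfolding alphabar_def sum_alpha[OF assms] by simp
  also have "sqrt (real (NN p)) / 2 / real (NN p) = 1 / (2 * sqrt (real (NN p)))"
    using \<open>0 < real (NN p)\<close> by (simp add: field_simps flip: real_sqrt_mult)
  finally show ?thesis .
qed

lemma beta_eq:
  assumes "prime p" "p mod 4 = 1"
  shows "beta p x = complex_of_real (1 / sqrt (real (NN p))) *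
    (1 - exp (\<i> * complex_of_real (theta p * real (fq p x) * (1 - 2 * real (lsb x)))))"
  unfolding beta_def alphabar_eq[OF assms] alpha_def by (simp add: algebra_simps)

lemma beta_eq_0:
  assumes "prime p" "p mod 4 = 1" "x \<notin> nonresidues p"
  shows "beta p x = 0"
  using assms by (simp add: beta_eq fq_eq_nonresidues)

lemma norm_beta_squared:
  assumes "prime p" "p mod 4 = 1" "x \<in> nonresidues p"
  shows "(cmod (beta p x))\<^sup>2 = 2 / (real p - 1)"
proof -
  define N where "N = real (NN p)"
  have "odd p" "1 < p"
    using assms prime_gt_1_nat by presburger+
  have "0 < N"
    unfolding N_def NN_def by simp
  have "fq p x = 1"
    using assms by (simp add: fq_eq_nonresidues)
  then have "beta p x = complex_of_real (1 / sqrt N) *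
      (1 - exp (\<i> * complex_of_real (theta p * (1 - 2 * real (lsb x)))))"
    unfolding beta_eq[OF assms(1,2)] N_def by (simp only: of_nat_1 mult_1_right)
  then have "(cmod (beta p x))\<^sup>2 =
      (1 / sqrt N)\<^sup>2 * (cmod (1 - exp (\<i> * complex_of_real (theta p * (1 - 2 * real (lsb x))))))\<^sup>2"
    by (simp only: norm_mult norm_of_real power_mult_distrib power2_abs)
  also have "\<dots> = (1 / sqrt N)\<^sup>2 * (2 - 2 * cos (theta p))"
    by (simp only: norm_one_minus_exp_squared cos_lsb_phase)
  also have "\<dots> = (2 - 2 * cos (theta p)) / N"
    using \<open>0 < N\<close> by (simp add: power_divide)
  also have "\<dots> = 2 / (real p - 1)"
    using \<open>1 < p\<close> \<open>0 < N\<close> unfolding cos_theta[OF \<open>odd p\<close> \<open>1 < p\<close>, folded N_def]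
    by (simp add: field_simps)
  finally show ?thesis .
qed

lemma sum_norm_beta_squared:
  assumes "prime p" "p mod 4 = 1"
  shows "(\<Sum>x<NN p. (cmod (beta p x))\<^sup>2) = 1"
proof -
  have "odd p" "2 < p"
    using assms prime_ge_2_nat[OF assms(1)] by presburger+
  have "(\<Sum>x<NN p. (cmod (beta p x))\<^sup>2) = (\<Sum>x\<in>nonresidues p. 2 / (real p - 1))"
    using nonresidues_subset_NN beta_eq_0[OF assms] norm_beta_squared[OF assms]
    by (intro sum.mono_neutral_cong_right) auto
  also have "\<dots> = 1"
    using card_nonresidues[OF assms(1) \<open>2 < p\<close>] \<open>odd p\<close> \<open>2 < p\<close> by (auto elim!: oddE)
  finally show ?thesis .
qed

lemma support_beta:
  assumes "prime p" "p mod 4 = 1"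
  shows "{x. x < NN p \<and> beta p x \<noteq> 0} = nonresidues p"
proof -
  have "beta p x \<noteq> 0" if "x \<in> nonresidues p" for x
    using norm_beta_squared[OF assms that] prime_gt_1_nat[OF assms(1)] by auto
  then show ?thesis
    using nonresidues_subset_NN beta_eq_0[OF assms] by blast
qed

theorem mainTheorem3:
  fixes p :: nat
  assumes "prime p" and "p mod 8 = 1"
  shows "alphabar p = complex_of_real (1 / (2 * sqrt (real (NN p)))) \<and>
    (\<forall>x<NN p. beta p x = complex_of_real (1 / sqrt (real (NN p))) *
           (1 - exp (\<i> * complex_of_real (theta p * real (fq p x) * (1 - 2 * real (lsb x)))))) \<and>
    (\<forall>x<NN p. fq p x = 0 \<longrightarrow> beta p x = 0) \<and>
    (\<forall>x<NN p. fq p x = 1 \<longrightarrow> (cmod (beta p x))\<^sup>2 = 2 / (real p - 1)) \<and>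
    (\<Sum>x<NN p. (cmod (beta p x))\<^sup>2) = 1 \<and>
    {x. x < NN p \<and> beta p x \<noteq> 0} = {x \<in> {1..p-1}. \<not> QuadRes (int p) (int x)} \<and>
    card {x \<in> {1..p-1}. \<not> QuadRes (int p) (int x)} = (p - 1) div 2 \<and>
    (\<forall>x \<in> {x \<in> {1..p-1}. \<not> QuadRes (int p) (int x)}. (cmod (beta p x))\<^sup>2 = 2 / (real p - 1))"
proof -
  have p: "prime p" "p mod 4 = 1" "2 < p"
    using assms prime_ge_2_nat[OF assms(1)] by presburger+
  have "fq p x = 0 \<longleftrightarrow> x \<notin> nonresidues p" "fq p x = 1 \<longleftrightarrow> x \<in> nonresidues p" for x
    using fq_eq_nonresidues[OF p(1)] by simp_all
  then show ?thesis
    unfolding nonresidues_def[symmetric]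
    using alphabar_eq[OF p(1,2)] beta_eq[OF p(1,2)] beta_eq_0[OF p(1,2)] norm_beta_squared[OF p(1,2)]
      sum_norm_beta_squared[OF p(1,2)] support_beta[OF p(1,2)] card_nonresidues[OF p(1,3)]
    by blast
qed

end
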